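(* Let $\delta_j,\delta_k$ be coprime integers with $1<\delta_j<\delta_k$, let $r=\delta_k \bmod \delta_j$, and let $f\colon \mathcal B(\delta_j,r)\to\mathcal B(\delta_k,\delta_j)$ be given by $f(x',y')=(y',\,x'-y'\lfloor \delta_k/\delta_j\rfloor)$. Then $f$ is well defined (maps into $\mathcal B(\delta_k,\delta_j)$), injective, and additive: whenever $\mathbf a,\mathbf b,\mathbf a+\mathbf b\in\mathcal B(\delta_j,r)$, one has $f(\mathbf a+\mathbf b)=f(\mathbf a)+f(\mathbf b)$.
   Context: For coprime positive integers $p,q$ and $i\in\{1,\ldots,\max\{p,q\}\}$, the $\lambda$-B\'ezout couple of $i$ for $(p,q)$ is the unique $(x,y)\in\mathbb Z^2$ with $xp+yq=i$ and $0<y\le p$, and the $\mu$-B\'ezout couple of $i$ for $(p,q)$ is the unique $(x,y)\in\mathbb Z^2$ with $xp+yq=i$ and $0<x\le q$. $\mathcal B(p,q)$ denotes the set of all $\lambda$- and $\mu$-B\'ezout couples for $(p,q)$ (for all such $i$); an element of $\mathcal B(p,q)$ is called a B\'ezout couple for $(p,q)$. Note that $1\le r<\delta_j$ since $\gcd(\delta_j,\delta_k)=1$ and $\delta_j>1$. *)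

theory Defs
  imports Main "HOL-Library.Product_Plus"
begin

definition lambda_couple :: "int \<Rightarrow> int \<Rightarrow> int \<Rightarrow> int \<times> int" where
  "lambda_couple p q i = (THE c. fst c * p + snd c * q = i \<and> 0 < snd c \<and> snd c \<le> p)"

definition mu_couple :: "int \<Rightarrow> int \<Rightarrow> int \<Rightarrow> int \<times> int" where
  "mu_couple p q i = (THE c. fst c * p + snd c * q = i \<and> 0 < fst c \<and> fst c \<le> q)"

definition bezout_couples :: "int \<Rightarrow> int \<Rightarrow> (int \<times> int) set" where
  "bezout_couples p q =
     (lambda_couple p q ` {1..max p q}) \<union> (mu_couple p q ` {1..max p q})"

definition prop35_map :: "int \<Rightarrow> int \<Rightarrow> int \<times> int \<Rightarrow> int \<times> int" where
  "prop35_map dj dk c = (snd c, fst c - snd c * (dk div dj))"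

end

theory Submission
  imports Defs
begin

text \<open>Membership in \<open>\<B>(p,q)\<close> is a purely arithmetic condition on \<open>(x,y)\<close>: the value
  \<open>xp + yq\<close> lies in \<open>[1, max p q]\<close> and one coordinate lies in its normalising window.
  The map \<open>(x,y) \<mapsto> (y, x - y\<lfloor>\<delta>\<^sub>k/\<delta>\<^sub>j\<rfloor>)\<close> is linear and invertible and preserves that value,
  since \<open>\<delta>\<^sub>k = \<lfloor>\<delta>\<^sub>k/\<delta>\<^sub>j\<rfloor>\<delta>\<^sub>j + r\<close>; a \<open>\<lambda>\<close>-couple for \<open>(\<delta>\<^sub>j,r)\<close> becomes a \<open>\<mu>\<close>-couple for
  \<open>(\<delta>\<^sub>k,\<delta>\<^sub>j)\<close> at once, and a \<open>\<mu>\<close>-couple becomes a \<open>\<lambda>\<close>-couple by a short size estimate.\<close>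

lemma bezout_solution_unique:
  fixes p q :: int
  assumes "coprime p q" and "x1 * p + y1 * q = x2 * p + y2 * q"
    and "0 < y1" "y1 \<le> p" "0 < y2" "y2 \<le> p"
  shows "(x1, y1) = (x2, y2)"
proof -
  have "(y1 - y2) * q = p * (x2 - x1)"
    using assms(2) by (simp add: algebra_simps)
  then have "p dvd (y1 - y2) * q"
    by simp
  then have "p dvd y1 - y2"
    using assms(1) by (simp add: coprime_dvd_mult_left_iff)
  moreover have "\<bar>y1 - y2\<bar> < p"
    using assms(3-6) by linarith
  ultimately have "y1 = y2"
    using dvd_imp_le_int[of "y1 - y2" p] by linarith
  with assms(2-4) show ?thesis
    by simp
qed

lemma bezout_solution_exists:
  fixes p q i :: int
  assumes "coprime p q" and "0 < p"
  shows "\<exists>x y. x * p + y * q = i \<and> 0 < y \<and> y \<le> p"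
proof -
  obtain s t where st: "s * p + t * q = 1"
    using bezout_int[of p q] assms(1) by (auto simp: coprime_iff_gcd_eq_1)
  define d where "d = (t * i - 1) div p"
  define y where "y = (t * i - 1) mod p + 1"
  have y_eq: "y = t * i - p * d"
    unfolding y_def d_def using div_mult_mod_eq[of "t * i - 1" p] by (simp add: algebra_simps)
  have "(s * i + q * d) * p + y * q = i * (s * p + t * q)"
    unfolding y_eq by (simp add: algebra_simps)
  moreover have "0 < y" "y \<le> p"
    unfolding y_def using assms(2) by (auto simp: add1_zle_eq)
  ultimately show ?thesis
    using st by auto
qed

lemma lambda_couple_eqI:
  fixes p q :: int
  assumes "coprime p q" and "x * p + y * q = i" "0 < y" "y \<le> p"
  shows "lambda_couple p q i = (x, y)"
  unfolding lambda_couple_def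
proof (rule the_equality)
  fix c :: "int \<times> int"
  assume "fst c * p + snd c * q = i \<and> 0 < snd c \<and> snd c \<le> p"
  then show "c = (x, y)"
    using bezout_solution_unique[OF assms(1), of "fst c" "snd c" x y] assms(2-4) by auto
qed (use assms in auto)

lemma mu_couple_eqI:
  fixes p q :: int
  assumes "coprime p q" and "x * p + y * q = i" "0 < x" "x \<le> q"
  shows "mu_couple p q i = (x, y)"
  unfolding mu_couple_def
proof (rule the_equality)
  fix c :: "int \<times> int"
  assume "fst c * p + snd c * q = i \<and> 0 < fst c \<and> fst c \<le> q"
  then show "c = (x, y)"
    using bezout_solution_unique[of q p "snd c" "fst c" y x] assms
    by (auto simp: coprime_commute algebra_simps)
qed (use assms in auto)

lemma mem_bezout_couples_iff:
  fixes p q x y :: int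
  assumes "coprime p q" and "0 < p" "0 < q"
  shows "(x, y) \<in> bezout_couples p q \<longleftrightarrow>
    1 \<le> x * p + y * q \<and> x * p + y * q \<le> max p q \<and> (0 < y \<and> y \<le> p \<or> 0 < x \<and> x \<le> q)"
proof
  assume "(x, y) \<in> bezout_couples p q"
  then obtain i where i: "1 \<le> i" "i \<le> max p q"
    and "(x, y) = lambda_couple p q i \<or> (x, y) = mu_couple p q i"
    unfolding bezout_couples_def by auto
  then show "1 \<le> x * p + y * q \<and> x * p + y * q \<le> max p q \<and>
    (0 < y \<and> y \<le> p \<or> 0 < x \<and> x \<le> q)"
  proof (elim disjE)
    assume c: "(x, y) = lambda_couple p q i"
    obtain x' y' where "x' * p + y' * q = i" "0 < y'" "y' \<le> p"
      using bezout_solution_exists[OF assms(1,2)] by blast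
    with c lambda_couple_eqI[OF assms(1)] i show ?thesis
      by auto
  next
    assume c: "(x, y) = mu_couple p q i"
    have "coprime q p"
      using assms(1) by (simp add: coprime_commute)
    then obtain y' x' where "y' * q + x' * p = i" "0 < x'" "x' \<le> q"
      using bezout_solution_exists[OF _ assms(3)] by blast
    with c mu_couple_eqI[OF assms(1)] i show ?thesis
      by (auto simp: add.commute)
  qed
next
  assume "1 \<le> x * p + y * q \<and> x * p + y * q \<le> max p q \<and>
    (0 < y \<and> y \<le> p \<or> 0 < x \<and> x \<le> q)"
  then show "(x, y) \<in> bezout_couples p q"
    unfolding bezout_couples_def
    using lambda_couple_eqI[OF assms(1)] mu_couple_eqI[OF assms(1)]
    by (metis (no_types, lifting) Un_iff atLeastAtMost_iff image_eqI)
qed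

lemma prop35_map_add:
  "prop35_map d e (a + b) = prop35_map d e a + prop35_map d e b"
  by (simp add: prop35_map_def algebra_simps)

lemma inj_prop35_map: "inj (prop35_map d e)"
  by (rule injI) (auto simp: prop35_map_def prod_eq_iff)

text \<open>The \<open>\<mu>\<close>-couple case: \<open>y \<le> 0\<close> because \<open>x\<delta>\<^sub>j \<ge> \<delta>\<^sub>j \<ge> i\<close>, and \<open>-y < \<delta>\<^sub>j\<close> because
  \<open>-yr = x\<delta>\<^sub>j - i < r\<delta>\<^sub>j\<close>; then \<open>(x - yq)\<delta>\<^sub>j = i - y\<delta>\<^sub>k \<le> \<delta>\<^sub>j + (\<delta>\<^sub>j - 1)\<delta>\<^sub>k \<le> \<delta>\<^sub>j\<delta>\<^sub>k\<close>.\<close>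

lemma mu_window_to_lambda_window:
  fixes dj dk q r x y i :: int
  assumes "0 < dj" "dj \<le> dk" "dk = q * dj + r" "0 \<le> q" "0 < r"
    and "x * dj + y * r = i" "0 < i" "i \<le> dj" "0 < x" "x \<le> r"
  shows "0 < x - y * q \<and> x - y * q \<le> dk"
proof
  have "dj \<le> x * dj"
    using assms(1,9) by simp
  then have "y * r \<le> 0"
    using assms(6,8) by linarith
  then have "y \<le> 0"
    using assms(5) by (simp add: mult_le_0_iff)
  then have "y * q \<le> 0"
    using assms(4) by (rule mult_nonpos_nonneg)
  then show "0 < x - y * q"
    using assms(9) by linarith
  have "x * dj \<le> r * dj"
    using assms(1,10) by simp
  then have "(- y) * r < dj * r"
    using assms(6,7) by (simp add: algebra_simps)
  then have "- y < dj"
    by (simp only: mult_less_cancel_right_pos[OF assms(5)])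
  then have "(- y) * dk \<le> (dj - 1) * dk"
    by (intro mult_right_mono) (use assms(1,2) in linarith)+
  moreover have "(x - y * q) * dj = i + (- y) * dk"
    using assms(3,6) by (simp add: algebra_simps)
  ultimately have "(x - y * q) * dj \<le> dk * dj"
    using assms(2,8) by (simp add: algebra_simps)
  then show "x - y * q \<le> dk"
    using assms(1) by simp
qed

lemma prop35_map_in_bezout_couples:
  fixes dj dk :: int
  assumes "coprime dj dk" "1 < dj" "dj < dk"
    and c: "c \<in> bezout_couples dj (dk mod dj)"
  shows "prop35_map dj dk c \<in> bezout_couples dk dj"
proof -
  define q r where "q = dk div dj" and "r = dk mod dj"
  have dk_eq: "dk = q * dj + r"
    unfolding q_def r_def by simp
  have dj_pos: "0 < dj"
    using assms(2) by simp
  have coprime_r: "coprime dj r"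
    unfolding r_def using assms(1,2) by simp
  have "r \<noteq> 0"
  proof
    assume "r = 0"
    then have "dj dvd dk"
      unfolding r_def by (simp add: dvd_eq_mod_eq_0)
    then have "is_unit dj"
      using assms(1) by (meson coprime_common_divisor dvd_refl)
    with assms(2) show False
      by simp
  qed
  then have r_pos: "0 < r" and "r < dj"
    using assms(2) unfolding r_def by (simp_all add: order_le_neq_trans)
  have "0 \<le> q"
    unfolding q_def using assms(2,3) by (simp add: pos_imp_zdiv_nonneg_iff)
  obtain x y where c_eq: "c = (x, y)"
    by fastforce
  define i where "i = x * dj + y * r"
  have "(x, y) \<in> bezout_couples dj r"
    using c unfolding c_eq r_def .
  then have "1 \<le> i \<and> i \<le> max dj r \<and> (0 < y \<and> y \<le> dj \<or> 0 < x \<and> x \<le> r)"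
    unfolding i_def using mem_bezout_couples_iff[OF coprime_r dj_pos r_pos] by blast
  then have i: "1 \<le> i" "i \<le> dj" and window: "0 < y \<and> y \<le> dj \<or> 0 < x \<and> x \<le> r"
    using \<open>r < dj\<close> by auto
  have image: "prop35_map dj dk c = (y, x - y * q)"
    unfolding c_eq q_def prop35_map_def by simp
  have image_value: "y * dk + (x - y * q) * dj = i"
    unfolding dk_eq i_def by (simp add: algebra_simps)
  from window have "0 < y \<and> y \<le> dj \<or> 0 < x - y * q \<and> x - y * q \<le> dk"
  proof (rule disj_forward)
    assume "0 < x \<and> x \<le> r"
    then show "0 < x - y * q \<and> x - y * q \<le> dk"
      using mu_window_to_lambda_window[OF dj_pos _ dk_eq \<open>0 \<le> q\<close> r_pos, of x y i] i assms(3)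
      unfolding i_def by auto
  qed
  moreover have "coprime dk dj"
    using assms(1) by (simp add: coprime_commute)
  moreover have "0 < dk"
    using assms(2,3) by simp
  ultimately show ?thesis
    unfolding image using mem_bezout_couples_iff[of dk dj y "x - y * q"] dj_pos image_value i assms(3)
    by auto
qed

theorem proposition3p5:
  fixes dj dk :: int
  assumes "coprime dj dk" and "1 < dj" and "dj < dk"
  defines "r \<equiv> dk mod dj"
  shows "prop35_map dj dk ` bezout_couples dj r \<subseteq> bezout_couples dk dj \<and>
         inj_on (prop35_map dj dk) (bezout_couples dj r) \<and>
         (\<forall>a b. a \<in> bezout_couples dj r \<longrightarrow> b \<in> bezout_couples dj r \<longrightarrow>
           a + b \<in> bezout_couples dj r \<longrightarrow>
           prop35_map dj dk (a + b) = prop35_map dj dk a + prop35_map dj dk b)"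
  using prop35_map_in_bezout_couples[OF assms(1-3)] inj_prop35_map[THEN inj_on_subset]
    prop35_map_add
  unfolding r_def by blast

end
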